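(* Let $n,r,s\ge1$ and positive integers $m_1,\dots,m_r$, $n_1,\dots,n_s$ with $\sum_i m_i=\sum_k n_k=n$ and $r+s=n+1$. Let $\mathbf V\subset\mathbb{C}^{r+s}=\mathbb{C}^{n+1}$ be the set of $(\beta_1,\dots,\beta_r,\gamma_1,\dots,\gamma_s)$ satisfying $\sum_i m_i\beta_i=0$, $\sum_k n_k\gamma_k=0$ and the polynomial identity $\prod_{i=1}^r(z-\beta_i)^{m_i}=1+\prod_{k=1}^s(z-\gamma_k)^{n_k}$ in $\mathbb{C}[z]$, and let $\mathbf C\subset\mathbb{C}^n$ be the image of $\mathbf V$ under the map sending $(\beta,\gamma)$ to the coefficient vector $(a_0,\dots,a_{n-1})$ of $\prod_i(z-\beta_i)^{m_i}=z^n+a_{n-1}z^{n-1}+\dots+a_0$. Then each of $\mathbf V$ and $\mathbf C$ is either empty or of dimension $0$ (i.e. a finite set). *)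

theory Defs
  imports Complex_Main "HOL-Computational_Algebra.Polynomial"
begin

definition betaPoly :: "nat list \<Rightarrow> complex list \<Rightarrow> complex poly" where
  "betaPoly ms b = (\<Prod>i<length ms. [:-(b!i), 1:] ^ (ms!i))"

definition Vset :: "nat list \<Rightarrow> nat list \<Rightarrow> (complex list \<times> complex list) set" where
  "Vset ms ns = {(b, g). length b = length ms \<and> length g = length ns
     \<and> (\<Sum>i<length ms. of_nat (ms!i) * b!i) = 0
     \<and> (\<Sum>k<length ns. of_nat (ns!k) * g!k) = 0
     \<and> betaPoly ms b = 1 + betaPoly ns g}"

definition Cset :: "nat list \<Rightarrow> nat list \<Rightarrow> complex list set" where
  "Cset ms ns = (\<lambda>(b, g). map (\<lambda>j. coeff (betaPoly ms b) j) [0..<sum_list ms]) ` Vset ms ns"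

end

theory Submission
  imports Defs "HOL-Computational_Algebra.Polynomial_Factorial" "HOL-Computational_Algebra.Field_as_Ring"
    "HOL-Computational_Algebra.Fundamental_Theorem_Algebra" "HOL-Analysis.Analysis"
begin

text \<open>A point of \<open>V\<close> gives an identity \<open>P = 1 + Q\<close> between \<open>P = \<Prod>i<r. (z - \<beta> i) ^ m i\<close> and
  \<open>Q = \<Prod>k<s. (z - \<gamma> k) ^ n k\<close>. Differentiating gives \<open>A S = B T\<close>, where \<open>A\<close> and \<open>B\<close> are the same
  products with every multiplicity lowered by one and \<open>S = \<Sum>i<r. m i * \<Prod>j\<noteq>i. (z - \<beta> j)\<close>, \<open>T\<close>
  likewise. As \<open>P\<close> and \<open>Q\<close> differ by a nonzero constant, \<open>A\<close> and \<open>B\<close> are coprime, so \<open>B\<close> divides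
  \<open>S\<close>; since \<open>deg B = n - s = r - 1 \<ge> deg S\<close>, this forces \<open>S = n B\<close>. Hence the \<open>\<beta> i\<close> are distinct,
  and the same divisibility argument kills every tangent vector of \<open>V\<close>, i.e. every first-order
  deformation preserving the identity and both centroids; so every point of \<open>V\<close> is isolated.
  \<open>V\<close> is also bounded: rescaling an unbounded sequence of points to norm one gives in the limit a
  nonzero centred solution of \<open>P = Q\<close> with \<open>S = n B\<close>, but then
  \<open>P' * \<Prod>i<r. (z - \<beta> i) * \<Prod>k<s. (z - \<gamma> k) = n P\<^sup>2\<close>, so every critical point of \<open>P\<close> is a root,
  \<open>P\<close> has a single root, and centring makes it \<open>0\<close>. Being compact and discrete, \<open>V\<close> is finite, and
  so is its image \<open>C\<close>.\<close>

section \<open>Polynomials with prescribed roots\<close>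
definition root_poly :: "(nat \<Rightarrow> nat) \<Rightarrow> nat \<Rightarrow> (nat \<Rightarrow> 'a) \<Rightarrow> 'a::comm_ring_1 poly" where
  "root_poly m r b = (\<Prod>i<r. [:- b i, 1:] ^ m i)"

text \<open>\<open>cofactor_sum w r b / root_poly (\<lambda>_. 1) r b = (\<Sum>i<r. w i / (z - b i))\<close>; for \<open>w = m\<close> this is
  the logarithmic derivative of \<open>root_poly m r b\<close>.\<close>
definition cofactor_sum :: "(nat \<Rightarrow> 'a) \<Rightarrow> nat \<Rightarrow> (nat \<Rightarrow> 'a) \<Rightarrow> 'a::comm_ring_1 poly" where
  "cofactor_sum w r b = (\<Sum>i<r. smult (w i) (\<Prod>j\<in>{..<r} - {i}. [:- b j, 1:]))"

lemma poly_root_poly: "poly (root_poly m r b) z = (\<Prod>i<r. (z - b i) ^ m i)"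
  by (simp add: root_poly_def poly_prod)

lemma poly_cofactor_sum:
  "poly (cofactor_sum w r b) z = (\<Sum>i<r. w i * (\<Prod>j\<in>{..<r} - {i}. z - b j))"
  by (simp add: cofactor_sum_def poly_sum poly_prod)

lemma lead_coeff_root_poly [simp]: "lead_coeff (root_poly m r (b :: nat \<Rightarrow> 'a::idom)) = 1"
  by (simp add: root_poly_def lead_coeff_prod lead_coeff_power)

lemma degree_root_poly: "degree (root_poly m r (b :: nat \<Rightarrow> 'a::idom)) = (\<Sum>i<r. m i)"
  by (simp add: root_poly_def degree_prod_sum_eq degree_power_eq)

lemma root_poly_mult: "root_poly m r b * root_poly m' r b = root_poly (\<lambda>i. m i + m' i) r b"
  by (simp add: root_poly_def power_add prod.distrib)

lemma root_poly_reduce: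
  assumes "\<And>i. i < r \<Longrightarrow> 0 < m i"
  shows "root_poly m r b = root_poly (\<lambda>i. m i - 1) r b * root_poly (\<lambda>_. 1) r b"
  unfolding root_poly_mult using assms by (auto simp: root_poly_def intro!: prod.cong)

lemma poly_root_poly_at_root:
  assumes "i < r" "0 < m i"
  shows "poly (root_poly m r b) (b i) = 0"
  using assms by (auto simp: poly_root_poly zero_power intro!: prod_zero bexI[of _ i])

lemma degree_cofactor_sum: "degree (cofactor_sum w r (b :: nat \<Rightarrow> 'a::idom)) \<le> r - 1"
  unfolding cofactor_sum_def
  by (intro degree_sum_le order.trans[OF degree_smult_le]) (simp_all add: degree_prod_sum_eq)

lemma coeff_cofactor_sum: "coeff (cofactor_sum w r (b :: nat \<Rightarrow> 'a::idom)) (r - 1) = (\<Sum>i<r. w i)"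
  unfolding cofactor_sum_def coeff_sum
proof (rule sum.cong)
  fix i assume "i \<in> {..<r}"
  then have "degree (\<Prod>j\<in>{..<r} - {i}. [:- b j, 1:]) = r - 1"
    by (simp add: degree_prod_sum_eq)
  moreover have "lead_coeff (\<Prod>j\<in>{..<r} - {i}. [:- b j, 1:]) = 1"
    by (simp add: lead_coeff_prod)
  ultimately show "coeff (smult (w i) (\<Prod>j\<in>{..<r} - {i}. [:- b j, 1:])) (r - 1) = w i"
    by simp
qed simp

lemma poly_cofactor_sum_at:
  assumes "i < r"
  shows "poly (cofactor_sum w r b) (b i) = w i * (\<Prod>j\<in>{..<r} - {i}. b i - b j)"
proof -
  have "(\<Prod>j\<in>{..<r} - {l}. b i - b j) = 0" if "l < r" "l \<noteq> i" for l
    using that assms by (auto intro!: prod_zero bexI[of _ i])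
  then show ?thesis
    using assms by (simp add: poly_cofactor_sum sum.remove[of _ i])
qed

lemma root_poly_reduce_mult_cofactor_sum:
  assumes "\<And>i. i < r \<Longrightarrow> 0 < m i"
  shows "root_poly (\<lambda>i. m i - 1) r b * cofactor_sum w r b
    = (\<Sum>i<r. smult (w i) ((\<Prod>j\<in>{..<r} - {i}. [:- b j, 1:] ^ m j) * [:- b i, 1:] ^ (m i - 1)))"
proof -
  have "root_poly (\<lambda>i. m i - 1) r b * smult (w i) (\<Prod>j\<in>{..<r} - {i}. [:- b j, 1:])
      = smult (w i) ((\<Prod>j\<in>{..<r} - {i}. [:- b j, 1:] ^ m j) * [:- b i, 1:] ^ (m i - 1))"
    if i: "i < r" for i
  proof -
    have "(\<Prod>j\<in>{..<r} - {i}. [:- b j, 1:] ^ (m j - 1)) * (\<Prod>j\<in>{..<r} - {i}. [:- b j, 1:])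
        = (\<Prod>j\<in>{..<r} - {i}. [:- b j, 1:] ^ m j)"
      unfolding prod.distrib[symmetric] using assms
      by (intro prod.cong refl) (metis DiffD1 lessThan_iff Suc_diff_1 power_Suc2)
    then show ?thesis
      using i by (simp add: root_poly_def prod.remove[of "{..<r}" i] algebra_simps)
  qed
  then show ?thesis
    by (simp add: cofactor_sum_def sum_distrib_left)
qed

lemma pderiv_root_poly:
  assumes "\<And>i. i < r \<Longrightarrow> 0 < m i"
  shows "pderiv (root_poly m r b)
    = root_poly (\<lambda>i. m i - 1) r b * cofactor_sum (\<lambda>i. of_nat (m i)) r b"
proof -
  have "pderiv (root_poly m r b) = (\<Sum>i<r. smult (of_nat (m i))
      ((\<Prod>j\<in>{..<r} - {i}. [:- b j, 1:] ^ m j) * [:- b i, 1:] ^ (m i - 1)))"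
    by (simp add: root_poly_def pderiv_prod pderiv_power pderiv_pCons)
  also have "\<dots> = root_poly (\<lambda>i. m i - 1) r b * cofactor_sum (\<lambda>i. of_nat (m i)) r b"
    by (rule root_poly_reduce_mult_cofactor_sum[symmetric]) (rule assms)
  finally show ?thesis .
qed

lemma poly_root_poly_scale:
  "poly (root_poly m r (\<lambda>i. c * b i)) (c * z) = c ^ (\<Sum>i<r. m i) * poly (root_poly m r b) z"
proof -
  have "(c * z - c * b i) ^ m i = c ^ m i * (z - b i) ^ m i" for i
    by (simp add: power_mult_distrib flip: right_diff_distrib)
  then show ?thesis
    by (simp add: poly_root_poly power_sum prod.distrib)
qed

lemma continuous_on_poly_root_poly [continuous_intros]:
  fixes b :: "'b::topological_space \<Rightarrow> nat \<Rightarrow> 'a::real_normed_field"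
  assumes "\<And>i. continuous_on S (\<lambda>y. b y i)"
  shows "continuous_on S (\<lambda>y. poly (root_poly m r (b y)) z)"
  unfolding poly_root_poly by (intro continuous_intros assms)

lemma continuous_on_poly_cofactor_sum [continuous_intros]:
  fixes b :: "'b::topological_space \<Rightarrow> nat \<Rightarrow> 'a::real_normed_field"
  assumes "\<And>i. continuous_on S (\<lambda>y. b y i)"
  shows "continuous_on S (\<lambda>y. poly (cofactor_sum w r (b y)) z)"
  unfolding poly_cofactor_sum by (intro continuous_intros assms)

lemma tendsto_poly_root_poly:
  fixes b :: "'k \<Rightarrow> nat \<Rightarrow> 'a::real_normed_field"
  assumes "\<And>i. ((\<lambda>k. b k i) \<longlongrightarrow> b0 i) F"
  shows "((\<lambda>k. poly (root_poly m r (b k)) z) \<longlongrightarrow> poly (root_poly m r b0) z) F"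
  unfolding poly_root_poly by (intro tendsto_prod tendsto_power tendsto_diff tendsto_const assms)

lemma closed_poly_eq:
  fixes p q :: "'a::topological_space \<Rightarrow> complex poly"
  assumes "\<And>z. continuous_on UNIV (\<lambda>y. poly (p y) z)" "\<And>z. continuous_on UNIV (\<lambda>y. poly (q y) z)"
  shows "closed {y. p y = q y}"
proof -
  have "{y. p y = q y} = {y. \<forall>z. poly (p y) z = poly (q y) z}"
    using poly_ext by auto
  then show ?thesis
    using assms by (simp add: closed_Collect_all closed_Collect_eq)
qed

section \<open>Divisibility and roots\<close>
lemma coprime_divisors_of_const_diff:
  fixes p q a b :: "'a::field poly"
  assumes "p = [:c:] + q" "c \<noteq> 0" "a dvd p" "b dvd q"
  shows "coprime a b"
proof (rule coprimeI)
  fix d assume "d dvd a" "d dvd b"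
  then have "d dvd p - q"
    using assms(3,4) by (meson dvd_diff dvd_trans)
  then have "d dvd [:c:]"
    using assms(1) by simp
  moreover have "is_unit [:c:]"
    using assms(2) by (simp add: is_unit_const_poly_iff dvd_field_iff)
  ultimately show "is_unit d"
    by (rule dvd_unit_imp_unit)
qed

lemma dvd_degree_le_imp_smult:
  fixes p q :: "'a::field poly"
  assumes "lead_coeff q = 1" "q dvd p" "degree p \<le> degree q"
  shows "p = smult (coeff p (degree q)) q"
proof -
  obtain t where t: "p = q * t"
    using assms(2) by blast
  have "q \<noteq> 0"
    using assms(1) by auto
  show ?thesis
  proof (cases "t = 0")
    case False
    then have "degree t = 0"
      using assms(3) \<open>q \<noteq> 0\<close> by (simp add: t degree_mult_eq)
    then obtain k where "t = [:k:]"
      by (meson degree_eq_zeroE)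
    then show ?thesis
      using assms(1) by (simp add: t)
  qed (simp add: t)
qed

lemma degree_eq_sum_order:
  fixes p :: "complex poly"
  assumes "p \<noteq> 0" "finite X" "{z. poly p z = 0} \<subseteq> X"
  shows "degree p = (\<Sum>x\<in>X. order x p)"
proof -
  have "degree p = size (proots p)"
    by (simp add: size_proots_complex)
  also have "\<dots> = (\<Sum>x\<in>set_mset (proots p). count (proots p) x)"
    by (simp add: size_multiset_overloaded_eq)
  also have "\<dots> = (\<Sum>x\<in>X. count (proots p) x)"
    using assms by (intro sum.mono_neutral_left) (auto simp: order_root)
  also have "\<dots> = (\<Sum>x\<in>X. order x p)"
    using assms(1) by simp
  finally show ?thesis .
qed

text \<open>Every root of \<open>p\<close> has order one more in \<open>p\<close> than in \<open>pderiv p\<close>; if \<open>pderiv p\<close>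
  has no other roots, summing orders gives \<open>degree p = degree (pderiv p) + #roots\<close>.\<close>
lemma card_roots_eq_1_if_pderiv_roots_are_roots:
  fixes p :: "complex poly"
  assumes "0 < degree p" and "\<And>z. poly (pderiv p) z = 0 \<Longrightarrow> poly p z = 0"
  shows "card {z. poly p z = 0} = 1"
proof -
  define X where "X = {z. poly p z = 0}"
  have "p \<noteq> 0" "pderiv p \<noteq> 0"
    using assms(1) by (auto simp: pderiv_eq_0_iff)
  have "finite X"
    unfolding X_def using \<open>p \<noteq> 0\<close> by (rule poly_roots_finite)
  have "{z. poly (pderiv p) z = 0} \<subseteq> X"
    using assms(2) by (auto simp: X_def)
  then have degree_pderiv_p: "degree (pderiv p) = (\<Sum>x\<in>X. order x (pderiv p))"
    by (rule degree_eq_sum_order[OF \<open>pderiv p \<noteq> 0\<close> \<open>finite X\<close>])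
  have "degree p = (\<Sum>x\<in>X. order x p)"
    using degree_eq_sum_order[OF \<open>p \<noteq> 0\<close> \<open>finite X\<close>] X_def by simp
  also have "\<dots> = (\<Sum>x\<in>X. Suc (order x (pderiv p)))"
    using \<open>p \<noteq> 0\<close> by (intro sum.cong) (auto simp: X_def order_pderiv)
  also have "\<dots> = degree (pderiv p) + card X"
    by (simp add: degree_pderiv_p sum_Suc)
  finally show ?thesis
    using assms(1) by (simp add: X_def degree_pderiv)
qed

section \<open>Difference quotients\<close>
lemma tendsto_diff_quotient_prod:
  fixes a :: "'k \<Rightarrow> 'i \<Rightarrow> 'a::real_normed_field"
  assumes "finite I" and e: "(e \<longlongrightarrow> 0) F" "\<And>k. e k \<noteq> 0"
    and "\<And>i. i \<in> I \<Longrightarrow> ((\<lambda>k. (a k i - a0 i) / e k) \<longlongrightarrow> a' i) F"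
  shows "((\<lambda>k. ((\<Prod>i\<in>I. a k i) - (\<Prod>i\<in>I. a0 i)) / e k)
    \<longlongrightarrow> (\<Sum>i\<in>I. a' i * (\<Prod>j\<in>I - {i}. a0 j))) F"
  using assms(1,4)
proof (induction I rule: finite_induct)
  case (insert x I)
  have quotient_x: "((\<lambda>k. (a k x - a0 x) / e k) \<longlongrightarrow> a' x) F"
    using insert.prems by simp
  have "((\<lambda>k. a0 x + e k * ((a k x - a0 x) / e k)) \<longlongrightarrow> a0 x + 0 * a' x) F"
    using quotient_x e(1) by (intro tendsto_intros)
  then have "((\<lambda>k. a k x) \<longlongrightarrow> a0 x) F"
    using e(2) by simp
  then have "((\<lambda>k. a k x * (((\<Prod>i\<in>I. a k i) - (\<Prod>i\<in>I. a0 i)) / e k)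
      + (\<Prod>i\<in>I. a0 i) * ((a k x - a0 x) / e k))
    \<longlongrightarrow> a0 x * (\<Sum>i\<in>I. a' i * (\<Prod>j\<in>I - {i}. a0 j)) + (\<Prod>i\<in>I. a0 i) * a' x) F"
    using insert quotient_x by (intro tendsto_intros) auto
  moreover have "a k x * (((\<Prod>i\<in>I. a k i) - (\<Prod>i\<in>I. a0 i)) / e k)
      + (\<Prod>i\<in>I. a0 i) * ((a k x - a0 x) / e k)
    = ((\<Prod>i\<in>insert x I. a k i) - (\<Prod>i\<in>insert x I. a0 i)) / e k" for k
    using insert.hyps by (simp add: diff_divide_distrib algebra_simps)
  moreover have "a0 x * (\<Sum>i\<in>I. a' i * (\<Prod>j\<in>I - {i}. a0 j)) + (\<Prod>i\<in>I. a0 i) * a' x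
    = (\<Sum>i\<in>insert x I. a' i * (\<Prod>j\<in>insert x I - {i}. a0 j))"
  proof -
    have "insert x I - {i} = insert x (I - {i})" if "i \<in> I" for i
      using that insert.hyps by auto
    then have "(\<Sum>i\<in>I. a' i * (\<Prod>j\<in>insert x I - {i}. a0 j))
        = a0 x * (\<Sum>i\<in>I. a' i * (\<Prod>j\<in>I - {i}. a0 j))"
      using insert.hyps by (simp add: sum_distrib_left algebra_simps)
    moreover have "insert x I - {x} = I"
      using insert.hyps by auto
    ultimately show ?thesis
      using insert.hyps by (simp add: algebra_simps)
  qed
  ultimately show ?case
    by simp
qed simp

lemma tendsto_diff_quotient_power:
  fixes a :: "'k \<Rightarrow> 'a::real_normed_field"
  assumes "(e \<longlongrightarrow> 0) F" "\<And>k. e k \<noteq> 0" "((\<lambda>k. (a k - a0) / e k) \<longlongrightarrow> a') F"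
  shows "((\<lambda>k. (a k ^ p - a0 ^ p) / e k) \<longlongrightarrow> of_nat p * a' * a0 ^ (p - 1)) F"
proof -
  have "((\<lambda>k. ((\<Prod>i<p. a k) - (\<Prod>i<p. a0)) / e k)
      \<longlongrightarrow> (\<Sum>i<p. a' * (\<Prod>j\<in>{..<p} - {i}. a0))) F"
    using assms by (intro tendsto_diff_quotient_prod) auto
  moreover have "(\<Sum>i<p. a' * (\<Prod>j\<in>{..<p} - {i}. a0)) = of_nat p * a' * a0 ^ (p - 1)"
    by simp
  ultimately show ?thesis
    by (simp add: mult.assoc)
qed

lemma tendsto_diff_quotient_root_poly:
  fixes x :: "'k \<Rightarrow> nat \<Rightarrow> 'a::real_normed_field"
  assumes "\<And>i. i < r \<Longrightarrow> 0 < m i" and e: "(e \<longlongrightarrow> 0) F" "\<And>k. e k \<noteq> 0"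
    and "\<And>i. i < r \<Longrightarrow> ((\<lambda>k. (x k i - b i) / e k) \<longlongrightarrow> d i) F"
  shows "((\<lambda>k. (poly (root_poly m r (x k)) z - poly (root_poly m r b) z) / e k)
    \<longlongrightarrow> - poly (root_poly (\<lambda>i. m i - 1) r b * cofactor_sum (\<lambda>i. of_nat (m i) * d i) r b) z) F"
proof -
  have "((\<lambda>k. ((z - x k i) - (z - b i)) / e k) \<longlongrightarrow> - d i) F" if "i < r" for i
    using tendsto_minus[OF assms(4)[OF that]] by (simp add: minus_divide_left)
  then have "((\<lambda>k. ((z - x k i) ^ m i - (z - b i) ^ m i) / e k)
      \<longlongrightarrow> of_nat (m i) * - d i * (z - b i) ^ (m i - 1)) F" if "i < r" for i
    using that e by (intro tendsto_diff_quotient_power) auto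
  then have "((\<lambda>k. ((\<Prod>i<r. (z - x k i) ^ m i) - (\<Prod>i<r. (z - b i) ^ m i)) / e k)
      \<longlongrightarrow> (\<Sum>i<r. of_nat (m i) * - d i * (z - b i) ^ (m i - 1)
        * (\<Prod>j\<in>{..<r} - {i}. (z - b j) ^ m j))) F"
    using e by (intro tendsto_diff_quotient_prod) auto
  moreover have "(\<Sum>i<r. of_nat (m i) * - d i * (z - b i) ^ (m i - 1)
        * (\<Prod>j\<in>{..<r} - {i}. (z - b j) ^ m j))
      = - poly (root_poly (\<lambda>i. m i - 1) r b * cofactor_sum (\<lambda>i. of_nat (m i) * d i) r b) z"
  proof -
    have "root_poly (\<lambda>i. m i - 1) r b * cofactor_sum (\<lambda>i. of_nat (m i) * d i) r b
      = (\<Sum>i<r. smult (of_nat (m i) * d i)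
          ((\<Prod>j\<in>{..<r} - {i}. [:- b j, 1:] ^ m j) * [:- b i, 1:] ^ (m i - 1)))"
      by (rule root_poly_reduce_mult_cofactor_sum) (rule assms(1))
    then show ?thesis
      by (simp add: poly_sum poly_prod sum_negf[symmetric] algebra_simps)
  qed
  ultimately show ?thesis
    by (simp add: poly_root_poly)
qed

lemma tendsto_diff_quotient_linear_constraint:
  fixes X :: "nat \<Rightarrow> nat \<Rightarrow> 'a::real_normed_field"
  assumes "\<And>i. (\<lambda>k. (X k i - L i) / e k) \<longlonglongrightarrow> d i"
    and "\<And>k. (\<Sum>i<q. w i * X k (p + i)) = c" "(\<Sum>i<q. w i * L (p + i)) = c"
  shows "(\<Sum>i<q. w i * d (p + i)) = 0"
proof -
  have "(\<lambda>k. \<Sum>i<q. w i * ((X k (p + i) - L (p + i)) / e k)) \<longlonglongrightarrow> (\<Sum>i<q. w i * d (p + i))"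
    using assms(1) by (intro tendsto_intros)
  moreover have "(\<Sum>i<q. w i * ((X k (p + i) - L (p + i)) / e k))
      = ((\<Sum>i<q. w i * X k (p + i)) - (\<Sum>i<q. w i * L (p + i))) / e k" for k
    by (simp add: sum_divide_distrib sum_subtractf right_diff_distrib diff_divide_distrib)
  ultimately show ?thesis
    using assms(2,3) by (simp add: LIMSEQ_const_iff)
qed

definition l1_norm :: "nat \<Rightarrow> (nat \<Rightarrow> 'a::real_normed_vector) \<Rightarrow> real" where
  "l1_norm N x = (\<Sum>i<N. norm (x i))"

lemma tendsto_fun_iff:
  fixes X :: "'k \<Rightarrow> 'i \<Rightarrow> 'a::topological_space"
  shows "(X \<longlongrightarrow> L) F \<longleftrightarrow> (\<forall>i. ((\<lambda>k. X k i) \<longlongrightarrow> L i) F)"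
  using limitin_componentwise[of "\<lambda>_. euclidean" UNIV X L F]
  by (simp add: euclidean_product_topology)

lemma compact_PiE_UNIV:
  fixes K :: "'i \<Rightarrow> 'a::topological_space set"
  assumes "\<And>i. compact (K i)"
  shows "compact (Pi\<^sub>E UNIV K)"
  using compactin_PiE[of "\<lambda>_. euclidean" UNIV K] assms
  by (simp add: euclidean_product_topology)

lemma continuous_on_coordinate [continuous_intros]:
  "continuous_on S (\<lambda>x :: 'i \<Rightarrow> 'a::topological_space. x i)"
  by (rule continuous_on_subset[OF continuous_on_product_coordinates]) simp

lemma tendsto_l1_norm:
  assumes "(X \<longlongrightarrow> L) F"
  shows "((\<lambda>k. l1_norm N (X k)) \<longlongrightarrow> l1_norm N L) F"
proof -
  have "((\<lambda>k. X k i) \<longlongrightarrow> L i) F" for i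
    using assms by (simp add: tendsto_fun_iff)
  then show ?thesis
    unfolding l1_norm_def by (intro tendsto_sum tendsto_norm)
qed

lemma norm_le_l1_norm: "i < N \<Longrightarrow> norm (x i) \<le> l1_norm N x"
  unfolding l1_norm_def by (rule member_le_sum) auto

lemma l1_norm_pos:
  assumes "x \<noteq> (\<lambda>_. 0)" "\<And>i. N \<le> i \<Longrightarrow> x i = 0"
  shows "0 < l1_norm N x"
proof -
  obtain i where i: "x i \<noteq> 0"
    using assms(1) by auto
  then have "i < N"
    using assms(2) not_le by auto
  with i show ?thesis
    using norm_le_l1_norm[of i N x] by (meson less_le_trans zero_less_norm_iff)
qed

lemma l1_norm_eq_0_if_blocks_zero:
  assumes "\<And>i. i < r \<Longrightarrow> x i = 0" "\<And>k. k < s \<Longrightarrow> x (r + k) = 0"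
  shows "l1_norm (r + s) x = 0"
proof -
  have "x i = 0" if "i < r + s" for i
  proof (cases "i < r")
    case False
    then have "i = r + (i - r)" "i - r < s"
      using that by auto
    then show ?thesis
      using assms(2) by metis
  qed (rule assms(1))
  then show ?thesis
    by (simp add: l1_norm_def)
qed

lemma normalized_convergent_subseq:
  fixes Y :: "nat \<Rightarrow> nat \<Rightarrow> 'a::euclidean_space"
  assumes "\<And>k. Y k \<noteq> (\<lambda>_. 0)" "\<And>k i. N \<le> i \<Longrightarrow> Y k i = 0"
  obtains h d where "strict_mono h"
    and "((\<lambda>k i. Y (h k) i /\<^sub>R l1_norm N (Y (h k))) \<longlongrightarrow> d) sequentially"
    and "l1_norm N d = 1"
proof -
  define V where "V k = (\<lambda>i. Y k i /\<^sub>R l1_norm N (Y k))" for k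
  have pos: "0 < l1_norm N (Y k)" for k
    using assms by (rule l1_norm_pos)
  define K where "K i = (if i < N then cball 0 1 else {0 :: 'a})" for i
  have "compact (Pi\<^sub>E UNIV K)"
    by (rule compact_PiE_UNIV) (simp add: K_def)
  then have "seq_compact (Pi\<^sub>E UNIV K)"
    by (rule compact_imp_seq_compact)
  moreover have "\<forall>k. V k \<in> Pi\<^sub>E UNIV K"
  proof
    fix k
    have "norm (V k i) \<le> 1" if "i < N" for i
      using pos[of k] norm_le_l1_norm[OF that, of "Y k"] by (simp add: V_def field_simps)
    then show "V k \<in> Pi\<^sub>E UNIV K"
      using assms(2) by (auto simp: V_def K_def PiE_iff)
  qed
  ultimately obtain d h where "strict_mono h" and lim: "(V \<circ> h) \<longlonglongrightarrow> d"
    by (rule seq_compactE)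
  have "l1_norm N (V k) = 1" for k
    using pos[of k] by (simp add: V_def l1_norm_def flip: sum_distrib_left)
  then have "(\<lambda>k. 1) \<longlonglongrightarrow> l1_norm N d"
    using tendsto_l1_norm[OF lim, of N] by (simp add: o_def)
  then have "l1_norm N d = 1"
    using LIMSEQ_const_iff by metis
  with \<open>strict_mono h\<close> lim show ?thesis
    by (intro that) (simp_all add: V_def o_def)
qed

section \<open>The identity between the two root polynomials\<close>

locale partition_pair =
  fixes m n :: "nat \<Rightarrow> nat" and r s N :: nat
  assumes m_pos: "\<And>i. i < r \<Longrightarrow> 0 < m i" and n_pos: "\<And>k. k < s \<Longrightarrow> 0 < n k"
    and sum_m: "(\<Sum>i<r. m i) = N" and sum_n: "(\<Sum>k<s. n k) = N"
    and card_parts: "r + s = N + 1"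
begin

lemma swap: "partition_pair n m s r N"
  using n_pos m_pos sum_n sum_m card_parts by unfold_locales auto

lemma r_le_N: "r \<le> N"
proof -
  have "(\<Sum>i<r. 1) \<le> (\<Sum>i<r. m i)"
    using m_pos by (intro sum_mono) (simp add: Suc_le_eq)
  then show ?thesis
    using sum_m by simp
qed

lemma N_pos: "0 < N"
  using r_le_N partition_pair.r_le_N[OF swap] card_parts by linarith

lemma degree_root_poly_reduce_n: "degree (root_poly (\<lambda>k. n k - 1) s (g :: nat \<Rightarrow> complex)) = r - 1"
proof -
  have "(\<Sum>k<s. n k - 1) = (\<Sum>k<s. n k) - (\<Sum>k<s. 1)"
    using n_pos by (intro sum_subtractf_nat) (simp add: Suc_le_eq)
  then show ?thesis
    using sum_n card_parts by (simp add: degree_root_poly)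
qed

context
  fixes b g :: "nat \<Rightarrow> complex" and c :: complex
  assumes identity: "root_poly m r b = [:c:] + root_poly n s g" and c_nonzero: "c \<noteq> 0"
begin

text \<open>Here \<open>r + s = N + 1\<close> enters: \<open>root_poly (\<lambda>k. n k - 1) s g\<close> has degree \<open>r - 1\<close>, which
  bounds the degree of every cofactor sum over \<open>r\<close> roots.\<close>
lemma cofactor_sum_eq_smult_reduce:
  assumes "root_poly (\<lambda>i. m i - 1) r b * cofactor_sum w r b = root_poly (\<lambda>k. n k - 1) s g * t"
  shows "cofactor_sum w r b = smult (\<Sum>i<r. w i) (root_poly (\<lambda>k. n k - 1) s g)"
proof -
  have coprime: "coprime (root_poly (\<lambda>i. m i - 1) r b) (root_poly (\<lambda>k. n k - 1) s g)"
    by (rule coprime_divisors_of_const_diff[OF identity c_nonzero])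
      (simp_all add: root_poly_reduce[of r m, OF m_pos] root_poly_reduce[of s n, OF n_pos])
  have "root_poly (\<lambda>k. n k - 1) s g dvd root_poly (\<lambda>i. m i - 1) r b * cofactor_sum w r b"
    unfolding assms by simp
  then have "root_poly (\<lambda>k. n k - 1) s g dvd cofactor_sum w r b"
    by (rule coprime_dvd_mult_right_iff[OF coprime_commute[THEN iffD1, OF coprime], THEN iffD1])
  then have "cofactor_sum w r b
      = smult (coeff (cofactor_sum w r b) (r - 1)) (root_poly (\<lambda>k. n k - 1) s g)"
    using dvd_degree_le_imp_smult[OF lead_coeff_root_poly] degree_cofactor_sum[of w r b]
    by (metis degree_root_poly_reduce_n)
  then show ?thesis
    unfolding coeff_cofactor_sum .
qed

lemma cofactor_sum_multiplicities:
  "cofactor_sum (\<lambda>i. of_nat (m i)) r b = smult (of_nat N) (root_poly (\<lambda>k. n k - 1) s g)"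
proof -
  have "pderiv (root_poly m r b) = pderiv (root_poly n s g)"
    using identity by (simp add: pderiv_add)
  then have "root_poly (\<lambda>i. m i - 1) r b * cofactor_sum (\<lambda>i. of_nat (m i)) r b
      = root_poly (\<lambda>k. n k - 1) s g * cofactor_sum (\<lambda>k. of_nat (n k)) s g"
    by (simp add: pderiv_root_poly m_pos n_pos)
  from cofactor_sum_eq_smult_reduce[OF this] show ?thesis
    by (simp add: sum_m flip: of_nat_sum)
qed

lemma roots_distinct:
  assumes "i < r" "j < r" "i \<noteq> j"
  shows "b i \<noteq> b j"
proof
  assume "b i = b j"
  with assms have "(\<Prod>l\<in>{..<r} - {i}. b i - b l) = 0"
    by (intro prod_zero bexI[of _ j]) auto
  then have "poly (cofactor_sum (\<lambda>i. of_nat (m i)) r b) (b i) = 0"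
    by (simp add: poly_cofactor_sum_at[OF assms(1)])
  then have "poly (root_poly (\<lambda>k. n k - 1) s g) (b i) = 0"
    using N_pos by (simp add: cofactor_sum_multiplicities)
  then have "poly (root_poly n s g) (b i) = 0"
    by (simp add: root_poly_reduce[of s n, OF n_pos])
  moreover have "poly (root_poly m r b) (b i) = 0"
    by (rule poly_root_poly_at_root[of i r m b, OF assms(1) m_pos[OF assms(1)]])
  moreover have "poly (root_poly m r b) (b i) = c + poly (root_poly n s g) (b i)"
    using identity by simp
  ultimately show False
    using c_nonzero by simp
qed

lemma tangent_vanishes:
  assumes "(\<Sum>i<r. of_nat (m i) * d i) = 0"
    and "root_poly (\<lambda>i. m i - 1) r b * cofactor_sum (\<lambda>i. of_nat (m i) * d i) r b
      = root_poly (\<lambda>k. n k - 1) s g * t"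
    and "i < r"
  shows "d i = 0"
proof -
  have "cofactor_sum (\<lambda>i. of_nat (m i) * d i) r b = 0"
    using cofactor_sum_eq_smult_reduce[OF assms(2)] assms(1) by simp
  then have "of_nat (m i) * d i * (\<Prod>j\<in>{..<r} - {i}. b i - b j) = 0"
    using poly_cofactor_sum_at[of i r "\<lambda>i. of_nat (m i) * d i" b, OF assms(3)] by simp
  moreover have "(\<Prod>j\<in>{..<r} - {i}. b i - b j) \<noteq> 0"
    using roots_distinct[of i] assms(3) by (subst prod_zero_iff) auto
  ultimately show ?thesis
    using m_pos[OF assms(3)] by simp
qed

end

text \<open>This is the limit case \<open>c = 0\<close> of the identity. For \<open>p = root_poly m r b\<close> one gets
  \<open>pderiv p * root_poly (\<lambda>_. 1) r b * root_poly (\<lambda>_. 1) s g = N p\<^sup>2\<close>, so all critical points of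
  \<open>p\<close> are roots.\<close>
lemma degenerate_identity_single_root:
  fixes b g :: "nat \<Rightarrow> complex"
  assumes identity: "root_poly m r b = root_poly n s g"
    and cofactor: "cofactor_sum (\<lambda>i. of_nat (m i)) r b = smult (of_nat N) (root_poly (\<lambda>k. n k - 1) s g)"
  shows "card {z. poly (root_poly m r b) z = 0} = 1"
proof -
  define p where "p = root_poly m r b"
  have p_b: "p = root_poly (\<lambda>i. m i - 1) r b * root_poly (\<lambda>_. 1) r b"
    unfolding p_def by (rule root_poly_reduce) (rule m_pos)
  have p_g: "p = root_poly (\<lambda>k. n k - 1) s g * root_poly (\<lambda>_. 1) s g"
    unfolding p_def identity by (rule root_poly_reduce) (rule n_pos)
  have "pderiv p = smult (of_nat N) (root_poly (\<lambda>i. m i - 1) r b * root_poly (\<lambda>k. n k - 1) s g)"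
    unfolding p_def by (simp add: pderiv_root_poly m_pos cofactor)
  then have "pderiv p * (root_poly (\<lambda>_. 1) r b * root_poly (\<lambda>_. 1) s g)
      = smult (of_nat N) ((root_poly (\<lambda>i. m i - 1) r b * root_poly (\<lambda>_. 1) r b)
          * (root_poly (\<lambda>k. n k - 1) s g * root_poly (\<lambda>_. 1) s g))"
    by (simp only: mult_smult_left mult_smult_right mult_ac)
  also have "\<dots> = smult (of_nat N) (p * p)"
    by (simp only: p_b[symmetric] p_g[symmetric])
  finally have key: "pderiv p * (root_poly (\<lambda>_. 1) r b * root_poly (\<lambda>_. 1) s g) = smult (of_nat N) (p * p)" .
  have "poly p z = 0" if "poly (pderiv p) z = 0" for z
  proof -
    have "of_nat N * (poly p z * poly p z) = 0"
      using arg_cong[OF key, of "\<lambda>q. poly q z"] that by simp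
    then show ?thesis
      using N_pos by simp
  qed
  moreover have "0 < degree p"
    using N_pos by (simp add: p_def degree_root_poly sum_m)
  ultimately show ?thesis
    unfolding p_def by (rule card_roots_eq_1_if_pderiv_roots_are_roots[rotated])
qed

lemma degenerate_identity_trivial:
  fixes b g :: "nat \<Rightarrow> complex"
  assumes identity: "root_poly m r b = root_poly n s g"
    and cofactor: "cofactor_sum (\<lambda>i. of_nat (m i)) r b = smult (of_nat N) (root_poly (\<lambda>k. n k - 1) s g)"
    and centred: "(\<Sum>i<r. of_nat (m i) * b i) = 0"
  shows "(\<forall>i<r. b i = 0) \<and> (\<forall>k<s. g k = 0)"
proof -
  obtain z0 where roots: "{z. poly (root_poly m r b) z = 0} = {z0}"
    using degenerate_identity_single_root[OF identity cofactor] by (rule card_1_singletonE)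
  have "b i \<in> {z. poly (root_poly m r b) z = 0}" if "i < r" for i
    using poly_root_poly_at_root[of i r m b, OF that m_pos[OF that]] by simp
  then have b_z0: "b i = z0" if "i < r" for i
    using that by (simp add: roots)
  have "g k \<in> {z. poly (root_poly m r b) z = 0}" if "k < s" for k
    unfolding identity using poly_root_poly_at_root[of k s n g, OF that n_pos[OF that]] by simp
  then have g_z0: "g k = z0" if "k < s" for k
    using that by (simp add: roots)
  have "of_nat N * z0 = (\<Sum>i<r. of_nat (m i)) * z0"
    by (simp flip: sum_m)
  also have "\<dots> = 0"
    using centred by (simp add: b_z0 sum_distrib_right)
  finally have "z0 = 0"
    using N_pos by simp
  with b_z0 g_z0 show ?thesis
    by simp
qed

end

section \<open>The solution set\<close>

text \<open>A point \<open>(\<beta>, \<gamma>)\<close> is encoded as \<open>x\<close> with \<open>x i = \<beta>\<^sub>i\<close> for \<open>i < r\<close>, \<open>x (r + k) = \<gamma>\<^sub>k\<close>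
  for \<open>k < s\<close>, and \<open>x = 0\<close> beyond \<open>r + s\<close>.\<close>
definition solution_set :: "(nat \<Rightarrow> nat) \<Rightarrow> nat \<Rightarrow> (nat \<Rightarrow> nat) \<Rightarrow> nat \<Rightarrow> (nat \<Rightarrow> complex) set" where
  "solution_set m r n s = {x. (\<Sum>i<r. of_nat (m i) * x i) = 0 \<and> (\<Sum>k<s. of_nat (n k) * x (r + k)) = 0
     \<and> root_poly m r x = 1 + root_poly n s (\<lambda>k. x (r + k)) \<and> (\<forall>i. r + s \<le> i \<longrightarrow> x i = 0)}"

context partition_pair
begin

lemma closed_solution_set: "closed (solution_set m r n s)"
  unfolding solution_set_def
  by (intro closed_Collect_conj closed_Collect_all closed_Collect_imp closed_Collect_eq
      closed_poly_eq open_Collect_const) (auto intro!: continuous_intros)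

lemma solution_set_rescale:
  assumes "x \<in> solution_set m r n s" "t \<noteq> 0"
  shows "root_poly m r (\<lambda>i. x i / t) = [:inverse (t ^ N):] + root_poly n s (\<lambda>k. x (r + k) / t)"
proof (rule poly_ext)
  fix z
  let ?P = "poly (root_poly m r (\<lambda>i. x i / t)) z" and ?Q = "poly (root_poly n s (\<lambda>k. x (r + k) / t)) z"
  have "t ^ N * ?P = poly (root_poly m r x) (t * z)"
    using poly_root_poly_scale[of m r t "\<lambda>i. x i / t" z] assms(2) by (simp add: sum_m)
  also have "\<dots> = 1 + poly (root_poly n s (\<lambda>k. x (r + k))) (t * z)"
    using assms(1) by (simp add: solution_set_def)
  also have "poly (root_poly n s (\<lambda>k. x (r + k))) (t * z)
      = t ^ N * poly (root_poly n s (\<lambda>k. x (r + k) / t)) z"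
    using poly_root_poly_scale[of n s t "\<lambda>k. x (r + k) / t" z] assms(2) by (simp add: sum_n)
  finally have "t ^ N * (?P - ?Q) = 1"
    by (simp add: right_diff_distrib)
  then have "?P - ?Q = inverse (t ^ N)"
    by (rule inverse_unique[symmetric])
  then show "?P = poly ([:inverse (t ^ N):] + root_poly n s (\<lambda>k. x (r + k) / t)) z"
    by (simp add: diff_eq_eq)
qed

text \<open>Solutions rescaled by factors tending to infinity converge to a solution of the degenerate
  identity \<open>root_poly m r x = root_poly n s (\<lambda>k. x (r + k))\<close> that still satisfies the cofactor
  relation and the centring; only the origin does.\<close>
lemma rescaled_solutions_limit_zero:
  assumes X: "\<And>k. X k \<in> solution_set m r n s" and t: "\<And>k. t k \<noteq> 0"
    and t_large: "(\<lambda>k. inverse (t k ^ N)) \<longlonglongrightarrow> 0"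
    and lim: "(\<lambda>k i. X k i / t k) \<longlonglongrightarrow> L"
  shows "l1_norm (r + s) L = 0"
proof -
  define U where "U k = (\<lambda>i. X k i / t k)" for k
  have U_L: "U \<longlonglongrightarrow> L"
    using lim by (simp add: U_def[abs_def])
  have U_identity: "root_poly m r (U k) = [:inverse (t k ^ N):] + root_poly n s (\<lambda>j. U k (r + j))" for k
    unfolding U_def by (rule solution_set_rescale[OF X t])
  have U_pointwise: "(\<lambda>k. U k i) \<longlonglongrightarrow> L i" for i
    using U_L by (simp add: tendsto_fun_iff)
  have "root_poly m r L = root_poly n s (\<lambda>j. L (r + j))"
  proof (rule poly_ext)
    fix z
    have "(\<lambda>k. poly (root_poly m r (U k)) z - poly (root_poly n s (\<lambda>j. U k (r + j))) z)
        \<longlonglongrightarrow> poly (root_poly m r L) z - poly (root_poly n s (\<lambda>j. L (r + j))) z"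
      by (intro tendsto_diff tendsto_poly_root_poly U_pointwise)
    then have "(\<lambda>k. inverse (t k ^ N))
        \<longlonglongrightarrow> poly (root_poly m r L) z - poly (root_poly n s (\<lambda>j. L (r + j))) z"
      by (simp add: U_identity)
    from LIMSEQ_unique[OF this t_large]
    show "poly (root_poly m r L) z = poly (root_poly n s (\<lambda>j. L (r + j))) z"
      by simp
  qed
  moreover have "L \<in> {x. cofactor_sum (\<lambda>i. of_nat (m i)) r x
      = smult (of_nat N) (root_poly (\<lambda>k. n k - 1) s (\<lambda>j. x (r + j)))
    \<and> (\<Sum>i<r. of_nat (m i) * x i) = 0}" (is "_ \<in> ?C")
  proof (rule closed_sequentially[OF _ _ U_L])
    show "closed ?C"
      by (intro closed_Collect_conj closed_poly_eq closed_Collect_eq) (auto intro!: continuous_intros)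
    show "U k \<in> ?C" for k
    proof -
      have "(\<Sum>i<r. of_nat (m i) * U k i) = (\<Sum>i<r. of_nat (m i) * X k i) / t k"
        by (simp add: U_def sum_divide_distrib)
      then show ?thesis
        using X[of k] cofactor_sum_multiplicities[OF U_identity] t
        by (simp add: solution_set_def)
    qed
  qed
  ultimately have "(\<forall>i<r. L i = 0) \<and> (\<forall>k<s. L (r + k) = 0)"
    by (intro degenerate_identity_trivial) auto
  then show ?thesis
    by (simp add: l1_norm_eq_0_if_blocks_zero)
qed

lemma solution_set_bounded: "\<exists>M. \<forall>x\<in>solution_set m r n s. l1_norm (r + s) x \<le> M"
proof (rule ccontr)
  let ?S = "solution_set m r n s"
  assume "\<nexists>M. \<forall>x\<in>?S. l1_norm (r + s) x \<le> M"
  then have "\<forall>k::nat. \<exists>x. x \<in> ?S \<and> real k < l1_norm (r + s) x"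
    by (meson not_le)
  from choice[OF this] obtain X
    where X: "\<And>k. X k \<in> ?S" and large: "\<And>k. real k < l1_norm (r + s) (X k)"
    by blast
  have support: "X k i = 0" if "r + s \<le> i" for k i
    using X[of k] that by (simp add: solution_set_def)
  have "X k \<noteq> (\<lambda>_. 0)" for k
    using large[of k] by (auto simp: l1_norm_def)
  then obtain h L where h: "strict_mono h"
    and lim: "((\<lambda>k i. X (h k) i /\<^sub>R l1_norm (r + s) (X (h k))) \<longlongrightarrow> L) sequentially"
    and L_norm: "l1_norm (r + s) L = 1"
    using support by (rule normalized_convergent_subseq)
  define t where "t k = complex_of_real (l1_norm (r + s) (X (h k)))" for k
  have t_nonzero: "t k \<noteq> 0" for k
    using large[of "h k"] by (simp add: t_def)
  have "filterlim (\<lambda>k. l1_norm (r + s) (X (h k))) at_top sequentially"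
  proof (rule filterlim_at_top_mono[OF filterlim_real_sequentially], rule always_eventually, rule allI)
    fix k
    show "real k \<le> l1_norm (r + s) (X (h k))"
      using large[of "h k"] strict_mono_imp_increasing[OF h, of k] by linarith
  qed
  then have "(\<lambda>k. inverse (l1_norm (r + s) (X (h k)) ^ N)) \<longlonglongrightarrow> 0"
    using N_pos by (intro tendsto_inverse_0_at_top filterlim_pow_at_top)
  then have t_large: "(\<lambda>k. inverse (t k ^ N)) \<longlonglongrightarrow> 0"
    using tendsto_of_real[where 'a=complex] by (fastforce simp: t_def)
  have "(\<lambda>k i. X (h k) i / t k) = (\<lambda>k i. X (h k) i /\<^sub>R l1_norm (r + s) (X (h k)))"
    by (simp add: fun_eq_iff t_def scaleR_conv_of_real divide_inverse_commute)
  with lim have "(\<lambda>k i. X (h k) i / t k) \<longlonglongrightarrow> L"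
    by simp
  from rescaled_solutions_limit_zero[OF X t_nonzero t_large this]
  have "l1_norm (r + s) L = 0" .
  with L_norm show False
    by simp
qed

text \<open>A limit \<open>d\<close> of difference quotients of solutions at \<open>L\<close> is a tangent vector at \<open>L\<close>, so
  \<open>tangent_vanishes\<close>, applied to the identity and to its swap, kills both halves of \<open>d\<close>.\<close>
lemma difference_quotient_limit_zero:
  assumes L: "L \<in> solution_set m r n s" and X: "\<And>k. X k \<in> solution_set m r n s"
    and e: "e \<longlonglongrightarrow> 0" "\<And>k. e k \<noteq> 0"
    and d: "\<And>i. (\<lambda>k. (X k i - L i) / e k) \<longlonglongrightarrow> d i"
  shows "l1_norm (r + s) d = 0"
proof -
  have L_identity: "root_poly m r L = [:1:] + root_poly n s (\<lambda>k. L (r + k))"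
    using L by (simp add: solution_set_def one_pCons)
  have linearized: "root_poly (\<lambda>i. m i - 1) r L * cofactor_sum (\<lambda>i. of_nat (m i) * d i) r L
      = root_poly (\<lambda>k. n k - 1) s (\<lambda>k. L (r + k))
        * cofactor_sum (\<lambda>k. of_nat (n k) * d (r + k)) s (\<lambda>k. L (r + k))"
    (is "?lhs = ?rhs")
  proof (rule poly_ext)
    fix z
    have "(\<lambda>k. (poly (root_poly m r (X k)) z - poly (root_poly m r L) z) / e k)
        \<longlonglongrightarrow> - poly ?lhs z"
      using m_pos e d by (rule tendsto_diff_quotient_root_poly)
    moreover have "(\<lambda>k. (poly (root_poly n s (\<lambda>j. X k (r + j))) z
          - poly (root_poly n s (\<lambda>j. L (r + j))) z) / e k) \<longlonglongrightarrow> - poly ?rhs z"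
      using n_pos e d by (rule tendsto_diff_quotient_root_poly)
    moreover have "poly (root_poly m r (X k)) z - poly (root_poly m r L) z
        = poly (root_poly n s (\<lambda>j. X k (r + j))) z - poly (root_poly n s (\<lambda>j. L (r + j))) z" for k
      using X[of k] L by (simp add: solution_set_def)
    ultimately show "poly ?lhs z = poly ?rhs z"
      using LIMSEQ_unique by fastforce
  qed
  have "(\<Sum>i<r. of_nat (m i) * d (0 + i)) = 0"
    by (rule tendsto_diff_quotient_linear_constraint[OF d]) (use X L in \<open>simp_all add: solution_set_def\<close>)
  then have d_beta: "d i = 0" if "i < r" for i
    using tangent_vanishes[OF L_identity _ _ linearized that] by simp
  have sum_n: "(\<Sum>k<s. of_nat (n k) * d (r + k)) = 0"
    by (rule tendsto_diff_quotient_linear_constraint[OF d]) (use X L in \<open>simp_all add: solution_set_def\<close>)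
  have L_identity': "root_poly n s (\<lambda>k. L (r + k)) = [:- 1:] + root_poly m r L"
    using L_identity by simp
  have d_gamma: "d (r + k) = 0" if "k < s" for k
    using partition_pair.tangent_vanishes[OF swap L_identity' _ sum_n linearized[symmetric] that]
    by simp
  show ?thesis
    using d_beta d_gamma by (rule l1_norm_eq_0_if_blocks_zero)
qed

lemma isolated_in_solution_set:
  assumes L: "L \<in> solution_set m r n s"
  shows "L isolated_in solution_set m r n s"
proof (rule ccontr)
  let ?S = "solution_set m r n s"
  assume "\<not> L isolated_in ?S"
  with L have "L islimpt ?S"
    by (simp add: isolated_in_islimpt_iff)
  then obtain X where X: "\<And>k. X k \<in> ?S - {L}" and "X \<longlonglongrightarrow> L"
    by (auto simp: islimpt_sequential)
  define Y where "Y k = (\<lambda>i. X k i - L i)" for k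
  have Y_nonzero: "Y k \<noteq> (\<lambda>_. 0)" for k
    using X[of k] by (auto simp: Y_def fun_eq_iff)
  moreover have Y_support: "Y k i = 0" if "r + s \<le> i" for k i
    using X[of k] L that by (simp add: Y_def solution_set_def)
  ultimately obtain h d where h: "strict_mono h"
    and lim: "((\<lambda>k i. Y (h k) i /\<^sub>R l1_norm (r + s) (Y (h k))) \<longlongrightarrow> d) sequentially"
    and d_norm: "l1_norm (r + s) d = 1"
    by (rule normalized_convergent_subseq)
  define e where "e k = complex_of_real (l1_norm (r + s) (Y (h k)))" for k
  have e_nonzero: "e k \<noteq> 0" for k
    using l1_norm_pos[of "Y (h k)" "r + s"] Y_nonzero Y_support by (simp add: e_def)
  have e_zero: "e \<longlonglongrightarrow> 0"
  proof -
    have X_L: "(\<lambda>k. X (h k) i) \<longlonglongrightarrow> L i" for i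
      using LIMSEQ_subseq_LIMSEQ[OF \<open>X \<longlonglongrightarrow> L\<close> h] by (simp add: tendsto_fun_iff o_def)
    have "(\<lambda>k. Y (h k) i) \<longlonglongrightarrow> 0" for i
      using tendsto_diff[OF X_L[of i] tendsto_const[of "L i"]] by (simp add: Y_def)
    then have "(\<lambda>k. Y (h k)) \<longlonglongrightarrow> (\<lambda>_. 0)"
      by (simp add: tendsto_fun_iff)
    from tendsto_of_real[OF tendsto_l1_norm[OF this, of "r + s"], where 'a=complex] show ?thesis
      by (simp add: e_def[abs_def] l1_norm_def)
  qed
  have quotient: "(\<lambda>k. (X (h k) i - L i) / e k) \<longlonglongrightarrow> d i" for i
    using lim by (simp add: tendsto_fun_iff Y_def e_def scaleR_conv_of_real divide_inverse_commute)
  have "X (h k) \<in> ?S" for k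
    using X by blast
  from difference_quotient_limit_zero[OF L this e_zero e_nonzero quotient]
  have "l1_norm (r + s) d = 0" .
  with d_norm show False
    by simp
qed

lemma finite_solution_set: "finite (solution_set m r n s)"
proof -
  obtain M where M: "\<And>x. x \<in> solution_set m r n s \<Longrightarrow> l1_norm (r + s) x \<le> M"
    using solution_set_bounded by blast
  define K where "K i = (if i < r + s then cball 0 M else {0 :: complex})" for i
  have "solution_set m r n s \<subseteq> Pi\<^sub>E UNIV K"
  proof
    fix x assume x: "x \<in> solution_set m r n s"
    have "norm (x i) \<le> M" if "i < r + s" for i
      using norm_le_l1_norm[OF that, of x] M[OF x] by linarith
    then show "x \<in> Pi\<^sub>E UNIV K"
      using x by (auto simp: K_def solution_set_def PiE_iff)
  qed
  moreover have "compact (Pi\<^sub>E UNIV K)"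
    by (rule compact_PiE_UNIV) (simp add: K_def)
  ultimately have "compact (solution_set m r n s)"
    using closed_Int_compact[OF closed_solution_set] by (metis inf.absorb1)
  moreover have "discrete (solution_set m r n s)"
    by (simp add: discrete_def isolated_in_solution_set)
  ultimately show ?thesis
    using discrete_compact_finite_iff by blast
qed

end

lemma Vset_subset_image_solution_set:
  assumes "length ms = r" "length ns = s"
  shows "Vset ms ns \<subseteq> (\<lambda>x. (map x [0..<r], map (\<lambda>k. x (r + k)) [0..<s]))
    ` solution_set (nth ms) r (nth ns) s"
proof
  fix v assume "v \<in> Vset ms ns"
  then obtain b g where v: "v = (b, g)" and len: "length b = r" "length g = s"
    and centred: "(\<Sum>i<r. of_nat (ms ! i) * b ! i) = 0" "(\<Sum>k<s. of_nat (ns ! k) * g ! k) = 0"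
    and identity: "betaPoly ms b = 1 + betaPoly ns g"
    using assms by (auto simp: Vset_def)
  define x where "x i = (if i < r + s then (b @ g) ! i else 0)" for i
  have x_b: "x i = b ! i" if "i < r" for i
    using that len by (simp add: x_def nth_append)
  have x_g: "x (r + k) = g ! k" if "k < s" for k
    using that len by (simp add: x_def nth_append)
  have "x \<in> solution_set (nth ms) r (nth ns) s"
    using centred identity assms by (simp add: solution_set_def betaPoly_def root_poly_def x_b x_g)
      (simp add: x_def)
  moreover have "map x [0..<r] = b" "map (\<lambda>k. x (r + k)) [0..<s] = g"
    by (auto simp: len x_b x_g intro!: nth_equalityI)
  ultimately show "v \<in> (\<lambda>x. (map x [0..<r], map (\<lambda>k. x (r + k)) [0..<s])) ` solution_set (nth ms) r (nth ns) s"
    unfolding v by (metis (no_types, lifting) image_eqI)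
qed

theorem mainTheorem4:
  fixes n r s :: nat and ms ns :: "nat list"
  assumes "n \<ge> 1" "r \<ge> 1" "s \<ge> 1"
    and "length ms = r" "length ns = s"
    and "\<forall>i<r. ms!i > 0" "\<forall>k<s. ns!k > 0"
    and "sum_list ms = n" "sum_list ns = n"
    and "r + s = n + 1"
  shows "finite (Vset ms ns) \<and> finite (Cset ms ns)"
proof -
  interpret partition_pair "nth ms" "nth ns" r s n
    using assms by unfold_locales (simp_all add: sum_list_sum_nth atLeast0LessThan)
  have "finite (Vset ms ns)"
    using Vset_subset_image_solution_set[OF assms(4,5)] finite_solution_set
    by (meson finite_imageI finite_subset)
  then show ?thesis
    by (simp add: Cset_def)
qed

end
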